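(* Let $(G,r)$ be a symmetric group, $r(a,b)=({}^ab,a^b)$, and let $\Gamma=\{a\in G:\ {}^au=u\ \forall u\in G\}$. Then $\Gamma$ equals $\{a\in G: u^a=u\ \forall u\in G\}$, it is an abelian normal subgroup of $G$ invariant under the left and right actions of $G$ on itself, and, with $\widetilde{G}=G/\Gamma$ carrying the quotient symmetric group structure $r_{\widetilde G}(a\Gamma,b\Gamma)=({}^ab\,\Gamma,a^b\,\Gamma)$, the map $\varphi:\widetilde{G}\to[G]$, $a\Gamma\mapsto[a]$, is a well-defined isomorphism of symmetric sets from $(\widetilde{G},r_{\widetilde G})$ onto the retraction $\mathrm{Ret}(G,r)=([G],r_{[G]})$. In particular $[G]$ with multiplication $[a][b]=[ab]$ is a symmetric group and $\varphi$ is an isomorphism of symmetric groups.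
   Context: A symmetric group is a pair $(G,\sigma)$, $G$ a group, $\sigma(u,v)=({}^uv,u^v)$ an involutive bijection of $G\times G$ with ${}^a1=1,{}^1u=u,1^u=1,a^1=a$, ${}^{ab}u={}^a({}^bu)$, $a^{uv}=(a^u)^v$, ${}^a(uv)=({}^au)({}^{a^u}v)$, $(ab)^u=(a^{{}^bu})(b^u)$, $uv=({}^uv)(u^v)$; it is in particular a non-degenerate symmetric set (non-degenerate involutive set-theoretic solution of the Yang–Baxter equation). For a non-degenerate symmetric set $(X,r)$, $r(x,y)=({}^xy,x^y)$, define $x\sim y$ iff ${}^xz={}^yz$ for all $z\in X$; the retraction $\mathrm{Ret}(X,r)=([X],r_{[X]})$ is the set of classes $[X]=X/\sim$ with $r_{[X]}([x],[y])=([{}^xy],[x^y])$, a non-degenerate symmetric set. It is known (Takeuchi) that $(G/\Gamma, r_{\widetilde G})$ as in the claim is a well-defined symmetric group. *)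

theory Defs
  imports "HOL-Algebra.Coset"
begin

text \<open>A binary map r(x,y) = (L x y, R x y) on a set X is encoded by two functions:
  L x y = {}^x y (left action) and R x y = x^y (right action).\<close>

definition involutive_on :: "'a set \<Rightarrow> ('a \<Rightarrow> 'a \<Rightarrow> 'a) \<Rightarrow> ('a \<Rightarrow> 'a \<Rightarrow> 'a) \<Rightarrow> bool" where
  "involutive_on X L R \<longleftrightarrow>
     (\<forall>x\<in>X. \<forall>y\<in>X. L x y \<in> X \<and> R x y \<in> X) \<and>
     (\<forall>x\<in>X. \<forall>y\<in>X. L (L x y) (R x y) = x \<and> R (L x y) (R x y) = y)"

definition symmetric_set :: "'a set \<Rightarrow> ('a \<Rightarrow> 'a \<Rightarrow> 'a) \<Rightarrow> ('a \<Rightarrow> 'a \<Rightarrow> 'a) \<Rightarrow> bool" where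
  "symmetric_set X L R \<longleftrightarrow>
     involutive_on X L R \<and>
     (\<forall>x\<in>X. bij_betw (L x) X X) \<and>
     (\<forall>y\<in>X. bij_betw (\<lambda>x. R x y) X X) \<and>
     (\<forall>x\<in>X. \<forall>y\<in>X. \<forall>z\<in>X.
        (let r1 = (\<lambda>(a,b,c). (L a b, R a b, c));
             r2 = (\<lambda>(a,b,c). (a, L b c, R b c))
         in r1 (r2 (r1 (x,y,z))) = r2 (r1 (r2 (x,y,z)))))"

definition symmetric_group :: "('a,'b) monoid_scheme \<Rightarrow> ('a \<Rightarrow> 'a \<Rightarrow> 'a) \<Rightarrow> ('a \<Rightarrow> 'a \<Rightarrow> 'a) \<Rightarrow> bool" where
  "symmetric_group G L R \<longleftrightarrow>
     group G \<and> involutive_on (carrier G) L R \<and>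
     (\<forall>a\<in>carrier G. L a \<one>\<^bsub>G\<^esub> = \<one>\<^bsub>G\<^esub> \<and> L \<one>\<^bsub>G\<^esub> a = a \<and>
                     R \<one>\<^bsub>G\<^esub> a = \<one>\<^bsub>G\<^esub> \<and> R a \<one>\<^bsub>G\<^esub> = a) \<and>
     (\<forall>a\<in>carrier G. \<forall>b\<in>carrier G. \<forall>u\<in>carrier G.
        L (a \<otimes>\<^bsub>G\<^esub> b) u = L a (L b u) \<and>
        R a (b \<otimes>\<^bsub>G\<^esub> u) = R (R a b) u \<and>
        L a (b \<otimes>\<^bsub>G\<^esub> u) = L a b \<otimes>\<^bsub>G\<^esub> L (R a b) u \<and>
        R (a \<otimes>\<^bsub>G\<^esub> b) u = R a (L b u) \<otimes>\<^bsub>G\<^esub> R b u) \<and>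
     (\<forall>u\<in>carrier G. \<forall>v\<in>carrier G. u \<otimes>\<^bsub>G\<^esub> v = L u v \<otimes>\<^bsub>G\<^esub> R u v)"

definition symset_iso ::
  "'a set \<Rightarrow> ('a \<Rightarrow> 'a \<Rightarrow> 'a) \<Rightarrow> ('a \<Rightarrow> 'a \<Rightarrow> 'a) \<Rightarrow>
   'c set \<Rightarrow> ('c \<Rightarrow> 'c \<Rightarrow> 'c) \<Rightarrow> ('c \<Rightarrow> 'c \<Rightarrow> 'c) \<Rightarrow> ('a \<Rightarrow> 'c) \<Rightarrow> bool" where
  "symset_iso X LX RX Y LY RY f \<longleftrightarrow>
     bij_betw f X Y \<and>
     (\<forall>x\<in>X. \<forall>y\<in>X. f (LX x y) = LY (f x) (f y) \<and> f (RX x y) = RY (f x) (f y))"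

definition ret_rel :: "'a set \<Rightarrow> ('a \<Rightarrow> 'a \<Rightarrow> 'a) \<Rightarrow> ('a \<times> 'a) set" where
  "ret_rel X L = {(x,y). x \<in> X \<and> y \<in> X \<and> (\<forall>z\<in>X. L x z = L y z)}"

definition ret_class :: "'a set \<Rightarrow> ('a \<Rightarrow> 'a \<Rightarrow> 'a) \<Rightarrow> 'a \<Rightarrow> 'a set" where
  "ret_class X L x = ret_rel X L `` {x}"

definition ret_carrier :: "'a set \<Rightarrow> ('a \<Rightarrow> 'a \<Rightarrow> 'a) \<Rightarrow> 'a set set" where
  "ret_carrier X L = X // ret_rel X L"

definition ret_L :: "'a set \<Rightarrow> ('a \<Rightarrow> 'a \<Rightarrow> 'a) \<Rightarrow> 'a set \<Rightarrow> 'a set \<Rightarrow> 'a set" where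
  "ret_L X L C D = ret_class X L (L (SOME x. x \<in> C) (SOME y. y \<in> D))"

definition ret_R :: "'a set \<Rightarrow> ('a \<Rightarrow> 'a \<Rightarrow> 'a) \<Rightarrow> ('a \<Rightarrow> 'a \<Rightarrow> 'a) \<Rightarrow> 'a set \<Rightarrow> 'a set \<Rightarrow> 'a set" where
  "ret_R X L R C D = ret_class X L (R (SOME x. x \<in> C) (SOME y. y \<in> D))"

definition ret_group :: "('a,'b) monoid_scheme \<Rightarrow> ('a \<Rightarrow> 'a \<Rightarrow> 'a) \<Rightarrow> 'a set monoid" where
  "ret_group G L =
     \<lparr>carrier = ret_carrier (carrier G) L,
      mult = (\<lambda>C D. ret_class (carrier G) L ((SOME x. x \<in> C) \<otimes>\<^bsub>G\<^esub> (SOME y. y \<in> D))),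
      one = ret_class (carrier G) L \<one>\<^bsub>G\<^esub>\<rparr>"

definition quot_L :: "('a,'b) monoid_scheme \<Rightarrow> 'a set \<Rightarrow> ('a \<Rightarrow> 'a \<Rightarrow> 'a) \<Rightarrow> 'a set \<Rightarrow> 'a set \<Rightarrow> 'a set" where
  "quot_L G N L C D = N #>\<^bsub>G\<^esub> L (SOME x. x \<in> C) (SOME y. y \<in> D)"

definition quot_R :: "('a,'b) monoid_scheme \<Rightarrow> 'a set \<Rightarrow> ('a \<Rightarrow> 'a \<Rightarrow> 'a) \<Rightarrow> 'a set \<Rightarrow> 'a set \<Rightarrow> 'a set" where
  "quot_R G N R C D = N #>\<^bsub>G\<^esub> R (SOME x. x \<in> C) (SOME y. y \<in> D)"

end

theory Submission
  imports Defs
begin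

text \<open>
  Every \<open>a \<in> \<Gamma>\<close> satisfies
  \<open>a b = {}^a b \<cdot> a^b = b \<cdot> a^b\<close>, so \<open>a^b = b\<^sup>-\<^sup>1 a b\<close>, and the compatibility axiom
  \<open>{}^a(bu) = {}^ab \<cdot> {}^{a^b}u\<close> shows \<open>a^b \<in> \<Gamma>\<close>: thus \<open>\<Gamma>\<close> is a normal subgroup.
  Involutivity then turns \<open>{}^{b a b\<^sup>-\<^sup>1} b = b\<close> into \<open>b^a = b\<close>, and the symmetric argument
  gives the converse, so \<open>\<Gamma>\<close> is also the kernel of the right action; commutativity
  follows from \<open>ab = {}^ab \<cdot> a^b = ba\<close>. Finally \<open>{}^x = {}^y\<close> iff \<open>y x\<^sup>-\<^sup>1 \<in> \<Gamma>\<close>, so the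
  retraction classes are exactly the cosets \<open>\<Gamma> x\<close>: the retraction is literally the
  quotient \<open>G/\<Gamma>\<close>, the identity being the required isomorphism, and the quotient inherits
  the symmetric group axioms because both actions are constant on cosets.
\<close>

lemma (in group) inv_mult_cancel [simp]:
  "x \<in> carrier G \<Longrightarrow> y \<in> carrier G \<Longrightarrow> inv x \<otimes> (x \<otimes> y) = y"
  by (simp flip: m_assoc)

lemma (in group) mult_inv_cancel [simp]:
  "x \<in> carrier G \<Longrightarrow> y \<in> carrier G \<Longrightarrow> x \<otimes> (inv x \<otimes> y) = y"
  by (simp flip: m_assoc)

lemma (in group) ball_FactGroup:
  "(\<forall>C\<in>carrier (G Mod N). P C) \<longleftrightarrow> (\<forall>a\<in>carrier G. P (N #> a))"
  by (simp add: carrier_FactGroup)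

lemma (in group) quot_L_rcos:
  assumes N: "subgroup N G" and a: "a \<in> carrier G" and b: "b \<in> carrier G"
    and indep: "\<And>x y. x \<in> N #> a \<Longrightarrow> y \<in> N #> b \<Longrightarrow> N #> f x y = N #> f a b"
  shows "quot_L G N f (N #> a) (N #> b) = N #> f a b"
  unfolding quot_L_def
  using indep someI[of "\<lambda>x. x \<in> N #> a", OF rcos_self[OF a N]]
    someI[of "\<lambda>x. x \<in> N #> b", OF rcos_self[OF b N]]
  by blast

lemma (in group) FactGroup_some_rep:
  assumes N: "subgroup N G" and C: "C \<in> carrier (G Mod N)"
  shows "(SOME x. x \<in> C) \<in> carrier G" and "C = N #> (SOME x. x \<in> C)"
proof -
  obtain a where a: "a \<in> carrier G" and C_eq: "C = N #> a"
    using C by (auto simp: carrier_FactGroup)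
  have some: "(SOME x. x \<in> C) \<in> N #> a"
    unfolding C_eq using rcos_self[OF a N] by (rule someI)
  then show "(SOME x. x \<in> C) \<in> carrier G"
    using r_coset_subset_G[OF subgroup.subset[OF N] a] by blast
  show "C = N #> (SOME x. x \<in> C)"
    using repr_independence[OF some a N] C_eq by simp
qed

lemma (in group) rcos_mult_absorb:
  assumes "subgroup N G" and "k \<in> N" and "z \<in> carrier G"
  shows "N #> (k \<otimes> z) = N #> z"
  using repr_independence[OF rcosI[OF assms(2) subgroup.subset] assms(3,1)] assms by simp

lemma quot_R_eq_quot_L: "quot_R G N f = quot_L G N f"
  by (simp add: fun_eq_iff quot_L_def quot_R_def)

locale sym_group = group G for G (structure) +
  fixes L R :: "'a \<Rightarrow> 'a \<Rightarrow> 'a"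
  assumes symmetric_group: "symmetric_group G L R"
begin

lemma L_closed [intro, simp]: "a \<in> carrier G \<Longrightarrow> b \<in> carrier G \<Longrightarrow> L a b \<in> carrier G"
  and R_closed [intro, simp]: "a \<in> carrier G \<Longrightarrow> b \<in> carrier G \<Longrightarrow> R a b \<in> carrier G"
  and L_involution: "a \<in> carrier G \<Longrightarrow> b \<in> carrier G \<Longrightarrow> L (L a b) (R a b) = a"
  and R_involution: "a \<in> carrier G \<Longrightarrow> b \<in> carrier G \<Longrightarrow> R (L a b) (R a b) = b"
  using symmetric_group unfolding symmetric_group_def involutive_on_def by auto

lemma L_one_right [simp]: "a \<in> carrier G \<Longrightarrow> L a \<one> = \<one>"
  and L_one_left [simp]: "a \<in> carrier G \<Longrightarrow> L \<one> a = a"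
  and R_one_left [simp]: "a \<in> carrier G \<Longrightarrow> R \<one> a = \<one>"
  and R_one_right [simp]: "a \<in> carrier G \<Longrightarrow> R a \<one> = a"
  using symmetric_group unfolding symmetric_group_def by auto

context
  fixes a b u assumes abu: "a \<in> carrier G" "b \<in> carrier G" "u \<in> carrier G"
begin

lemma L_mult_left: "L (a \<otimes> b) u = L a (L b u)"
  and R_mult_right: "R a (b \<otimes> u) = R (R a b) u"
  and L_mult_right: "L a (b \<otimes> u) = L a b \<otimes> L (R a b) u"
  and R_mult_left: "R (a \<otimes> b) u = R a (L b u) \<otimes> R b u"
  using symmetric_group abu unfolding symmetric_group_def by blast+

end

lemma mult_eq_L_R: "u \<in> carrier G \<Longrightarrow> v \<in> carrier G \<Longrightarrow> u \<otimes> v = L u v \<otimes> R u v"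
  using symmetric_group unfolding symmetric_group_def by blast

lemma L_R_mult_assoc:
  "u \<in> carrier G \<Longrightarrow> v \<in> carrier G \<Longrightarrow> w \<in> carrier G \<Longrightarrow> L u v \<otimes> (R u v \<otimes> w) = u \<otimes> (v \<otimes> w)"
  by (simp flip: m_assoc mult_eq_L_R)

lemma bij_L: "x \<in> carrier G \<Longrightarrow> bij_betw (L x) (carrier G) (carrier G)"
  by (rule bij_betw_byWitness[where f' = "L (inv x)"])
     (auto simp flip: L_mult_left)

lemma bij_R: "y \<in> carrier G \<Longrightarrow> bij_betw (\<lambda>a. R a y) (carrier G) (carrier G)"
  by (rule bij_betw_byWitness[where f' = "\<lambda>a. R a (inv y)"])
     (auto simp flip: R_mult_right)

text \<open>Only the middle components of the braid relation need an argument: both sides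
  multiply out to \<open>x y z\<close>, and the outer components already agree.\<close>
lemma braid_relation:
  assumes x: "x \<in> carrier G" and y: "y \<in> carrier G" and z: "z \<in> carrier G"
  shows "L (L x y) (L (R x y) z) = L x (L y z)"
    and "R (L x y) (L (R x y) z) = L (R x (L y z)) (R y z)"
    and "R (R x y) z = R (R x (L y z)) (R y z)"
proof -
  show first: "L (L x y) (L (R x y) z) = L x (L y z)"
    using x y z by (simp flip: L_mult_left mult_eq_L_R)
  show third: "R (R x y) z = R (R x (L y z)) (R y z)"
    using x y z by (simp flip: R_mult_right mult_eq_L_R)
  have "L (L x y) (L (R x y) z) \<otimes> R (L x y) (L (R x y) z) \<otimes> R (R x y) z = x \<otimes> y \<otimes> z"
    using x y z by (simp add: m_assoc L_R_mult_assoc flip: mult_eq_L_R)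
  also have "\<dots> = L x (L y z) \<otimes> L (R x (L y z)) (R y z) \<otimes> R (R x (L y z)) (R y z)"
    using x y z by (simp add: m_assoc L_R_mult_assoc flip: mult_eq_L_R)
  finally show "R (L x y) (L (R x y) z) = L (R x (L y z)) (R y z)"
    using x y z first third by (simp add: m_assoc)
qed

lemma symmetric_set: "symmetric_set (carrier G) L R"
proof -
  have "involutive_on (carrier G) L R"
    using symmetric_group by (simp add: symmetric_group_def)
  then show ?thesis
    unfolding symmetric_set_def Let_def
    by (simp add: bij_L bij_R braid_relation(1,2) braid_relation(3)[symmetric])
qed

subsection \<open>The kernels of the two actions\<close>

abbreviation left_kernel :: "'a set" where
  "left_kernel \<equiv> {a \<in> carrier G. \<forall>u\<in>carrier G. L a u = u}"

abbreviation right_kernel :: "'a set" where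
  "right_kernel \<equiv> {a \<in> carrier G. \<forall>u\<in>carrier G. R u a = u}"

lemma R_left_kernel_eq:
  assumes a: "a \<in> left_kernel" and b: "b \<in> carrier G"
  shows "R a b = inv b \<otimes> a \<otimes> b"
proof -
  have "a \<otimes> b = b \<otimes> R a b"
    using mult_eq_L_R[of a b] a b by simp
  then show ?thesis
    using a b by (simp add: m_assoc inv_solve_left)
qed

lemma R_left_kernel_closed:
  assumes a: "a \<in> left_kernel" and b: "b \<in> carrier G"
  shows "R a b \<in> left_kernel"
proof -
  have "b \<otimes> L (R a b) u = b \<otimes> u" if u: "u \<in> carrier G" for u
  proof -
    have "b \<otimes> L (R a b) u = L a b \<otimes> L (R a b) u" using a b by simp
    also have "\<dots> = L a (b \<otimes> u)" using a b u by (simp add: L_mult_right)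
    also have "\<dots> = b \<otimes> u" using a b u by simp
    finally show ?thesis .
  qed
  then show ?thesis
    using a b by simp
qed

lemma conj_left_kernel_closed:
  assumes a: "a \<in> left_kernel" and b: "b \<in> carrier G"
  shows "inv b \<otimes> a \<otimes> b \<in> left_kernel"
    and "b \<otimes> a \<otimes> inv b \<in> left_kernel"
proof -
  have conj: "inv g \<otimes> a \<otimes> g \<in> left_kernel" if "g \<in> carrier G" for g
    using R_left_kernel_closed[OF a that] R_left_kernel_eq[OF a that] by simp
  show "inv b \<otimes> a \<otimes> b \<in> left_kernel"
    using conj b .
  show "b \<otimes> a \<otimes> inv b \<in> left_kernel"
    using conj[of "inv b"] b by simp
qed

text \<open>\<open>{}^{b c b\<^sup>-\<^sup>1} b = b\<close> and \<open>(b c b\<^sup>-\<^sup>1)^b = c\<close>, so involutivity of \<open>r\<close>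
  at \<open>(b c b\<^sup>-\<^sup>1, b)\<close> reads \<open>b^c = b\<close>.\<close>
lemma left_kernel_subset_right_kernel: "left_kernel \<subseteq> right_kernel"
proof (intro subsetI CollectI conjI ballI)
  fix c b assume c: "c \<in> left_kernel" and b: "b \<in> carrier G"
  define a where "a = b \<otimes> c \<otimes> inv b"
  have a: "a \<in> left_kernel"
    unfolding a_def using conj_left_kernel_closed(2)[OF c b] .
  have "R a b = c"
    using R_left_kernel_eq[OF a b] b c by (simp add: a_def m_assoc)
  moreover have "L a b = b"
    using a b by simp
  ultimately show "R b c = b"
    using R_involution[of a b] a b by simp
qed auto

lemma L_right_kernel_eq:
  assumes a: "a \<in> right_kernel" and u: "u \<in> carrier G"
  shows "L u a = u \<otimes> a \<otimes> inv u"
proof -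
  have "u \<otimes> a = L u a \<otimes> u"
    using mult_eq_L_R[of u a] a u by simp
  then show ?thesis
    using a u by (simp add: m_assoc inv_solve_right)
qed

lemma L_right_kernel_closed:
  assumes a: "a \<in> right_kernel" and u: "u \<in> carrier G"
  shows "L u a \<in> right_kernel"
proof -
  have "R b (L u a) = b" if b: "b \<in> carrier G" for b
  proof -
    have "R b (L u a) \<otimes> u = R b (L u a) \<otimes> R u a" using a u by simp
    also have "\<dots> = R (b \<otimes> u) a" by (rule R_mult_left[symmetric]) (use a b u in auto)
    also have "\<dots> = b \<otimes> u" using a b u by simp
    finally show ?thesis
      using a b u by simp
  qed
  then show ?thesis
    using a u by simp
qed

lemma right_kernel_subset_left_kernel: "right_kernel \<subseteq> left_kernel"
proof (intro subsetI CollectI conjI ballI)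
  fix c b assume c: "c \<in> right_kernel" and b: "b \<in> carrier G"
  define a where "a = inv b \<otimes> c \<otimes> b"
  have a: "a \<in> right_kernel"
    using L_right_kernel_closed[OF c, of "inv b"] L_right_kernel_eq[OF c, of "inv b"] b
    by (simp add: a_def)
  have "L b a = c"
    using L_right_kernel_eq[OF a b] b c by (simp add: a_def m_assoc)
  moreover have "R b a = b"
    using a b by simp
  ultimately show "L c b = b"
    using L_involution[of b a] a b by simp
qed auto

lemma left_kernel_eq_right_kernel: "left_kernel = right_kernel"
  using left_kernel_subset_right_kernel right_kernel_subset_left_kernel by (rule subset_antisym)

lemma L_left_kernel_closed:
  assumes c: "c \<in> left_kernel" and b: "b \<in> carrier G"
  shows "L b c \<in> left_kernel"
  using L_right_kernel_eq[of c b] conj_left_kernel_closed(2)[OF c b] c b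
  by (simp add: left_kernel_eq_right_kernel)

lemma left_kernel_subgroup: "subgroup left_kernel G"
proof (rule subgroupI)
  show "inv a \<in> left_kernel" if a: "a \<in> left_kernel" for a
  proof -
    have "L (inv a) u = u" if u: "u \<in> carrier G" for u
    proof -
      have "L (inv a) u = L (inv a) (L a u)" using a u by simp
      also have "\<dots> = L (inv a \<otimes> a) u" by (rule L_mult_left[symmetric]) (use a u in auto)
      also have "\<dots> = u" using a u by simp
      finally show ?thesis .
    qed
    then show ?thesis using a by simp
  qed
qed (auto simp: L_mult_left)

lemma left_kernel_normal: "left_kernel \<lhd> G"
  unfolding normal_inv_iff using left_kernel_subgroup conj_left_kernel_closed(2) by blast

lemma left_kernel_comm:
  assumes "x \<in> left_kernel" and "y \<in> left_kernel"
  shows "x \<otimes> y = y \<otimes> x"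
  using mult_eq_L_R[of x y] left_kernel_subset_right_kernel assms by auto

subsection \<open>Quotients\<close>

lemma symmetric_group_FactGroup:
  assumes N: "N \<lhd> G"
    and quot_L_eq: "\<And>a b. a \<in> carrier G \<Longrightarrow> b \<in> carrier G \<Longrightarrow>
      quot_L G N L (N #> a) (N #> b) = N #> L a b"
    and quot_R_eq: "\<And>a b. a \<in> carrier G \<Longrightarrow> b \<in> carrier G \<Longrightarrow>
      quot_R G N R (N #> a) (N #> b) = N #> R a b"
  shows "symmetric_group (G Mod N) (quot_L G N L) (quot_R G N R)"
proof -
  interpret N: normal N G by (rule N)
  have in_FactGroup: "N #> a \<in> carrier (G Mod N)" if "a \<in> carrier G" for a
    using that by (simp add: carrier_FactGroup)
  have one: "\<one>\<^bsub>G Mod N\<^esub> = N #> \<one>"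
    by (simp add: N.subset)
  show ?thesis
    unfolding symmetric_group_def involutive_on_def ball_FactGroup one
    using N.factorgroup_is_group
    by (simp add: quot_L_eq quot_R_eq N.rcos_sum in_FactGroup L_involution R_involution
        L_mult_left L_mult_right R_mult_left R_mult_right del: coset_mult_one flip: mult_eq_L_R)
qed

lemma L_rcos_left_kernel:
  assumes a: "a \<in> carrier G" and b: "b \<in> carrier G"
    and x: "x \<in> left_kernel #> a" and y: "y \<in> left_kernel #> b"
  shows "left_kernel #> L x y = left_kernel #> L a b"
proof -
  obtain g h where g: "g \<in> left_kernel" "x = g \<otimes> a" and h: "h \<in> left_kernel" "y = h \<otimes> b"
    using x y unfolding r_coset_def by blast
  have "L x y = L a (h \<otimes> b)"
    using g h a b by (simp add: L_mult_left)
  also have "\<dots> = L a h \<otimes> L a b"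
    using h a b left_kernel_subset_right_kernel by (auto simp: L_mult_right)
  finally show ?thesis
    using rcos_mult_absorb[OF left_kernel_subgroup L_left_kernel_closed[OF h(1) a]] a b by simp
qed

lemma R_rcos_left_kernel:
  assumes a: "a \<in> carrier G" and b: "b \<in> carrier G"
    and x: "x \<in> left_kernel #> a" and y: "y \<in> left_kernel #> b"
  shows "left_kernel #> R x y = left_kernel #> R a b"
proof -
  obtain g h where g: "g \<in> left_kernel" "x = g \<otimes> a" and h: "h \<in> left_kernel" "y = h \<otimes> b"
    using x y unfolding r_coset_def by blast
  have "R x y = R (g \<otimes> a) b"
    using g h a b left_kernel_subset_right_kernel by (auto simp: R_mult_right)
  also have "\<dots> = R g (L a b) \<otimes> R a b"
    using g a b by (simp add: R_mult_left)
  finally show ?thesis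
    using rcos_mult_absorb[OF left_kernel_subgroup R_left_kernel_closed[OF g(1) L_closed[OF a b]]]
      a b by simp
qed

lemma quot_L_left_kernel:
  "a \<in> carrier G \<Longrightarrow> b \<in> carrier G \<Longrightarrow>
    quot_L G left_kernel L (left_kernel #> a) (left_kernel #> b) = left_kernel #> L a b"
  by (rule quot_L_rcos[OF left_kernel_subgroup _ _ L_rcos_left_kernel])

lemma quot_R_left_kernel:
  "a \<in> carrier G \<Longrightarrow> b \<in> carrier G \<Longrightarrow>
    quot_R G left_kernel R (left_kernel #> a) (left_kernel #> b) = left_kernel #> R a b"
  unfolding quot_R_eq_quot_L by (rule quot_L_rcos[OF left_kernel_subgroup _ _ R_rcos_left_kernel])

subsection \<open>The retraction\<close>

lemma same_left_action_iff:
  assumes x: "x \<in> carrier G" and y: "y \<in> carrier G"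
  shows "(\<forall>z\<in>carrier G. L x z = L y z) \<longleftrightarrow> y \<otimes> inv x \<in> left_kernel"
proof
  assume same: "\<forall>z\<in>carrier G. L x z = L y z"
  have "L (y \<otimes> inv x) z = z" if z: "z \<in> carrier G" for z
  proof -
    have "L (y \<otimes> inv x) z = L y (L (inv x) z)" using x y z by (simp add: L_mult_left)
    also have "\<dots> = L x (L (inv x) z)" using same x z by simp
    also have "\<dots> = L (x \<otimes> inv x) z" by (rule L_mult_left[symmetric]) (use x z in auto)
    finally show ?thesis using x z by simp
  qed
  then show "y \<otimes> inv x \<in> left_kernel"
    using x y by simp
next
  assume "y \<otimes> inv x \<in> left_kernel"
  then show "\<forall>z\<in>carrier G. L x z = L y z"
    using x y L_mult_left[of "y \<otimes> inv x" x] by (simp add: m_assoc)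
qed

lemma ret_class_eq_rcos:
  assumes x: "x \<in> carrier G"
  shows "ret_class (carrier G) L x = left_kernel #> x"
proof -
  have "y \<in> ret_class (carrier G) L x \<longleftrightarrow> y \<in> left_kernel #> x" for y
  proof -
    have "y \<in> ret_class (carrier G) L x \<longleftrightarrow> y \<in> carrier G \<and> (\<forall>z\<in>carrier G. L x z = L y z)"
      using x by (auto simp: ret_class_def ret_rel_def)
    also have "\<dots> \<longleftrightarrow> y \<in> carrier G \<and> y \<otimes> inv x \<in> left_kernel"
      using same_left_action_iff[OF x] by blast
    also have "\<dots> \<longleftrightarrow> y \<in> left_kernel #> x"
      using subgroup.rcos_module[OF left_kernel_subgroup is_group x]
        r_coset_subset_G[OF subgroup.subset[OF left_kernel_subgroup] x] by blast
    finally show ?thesis .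
  qed
  then show ?thesis by blast
qed

lemma ret_carrier_eq_FactGroup: "ret_carrier (carrier G) L = carrier (G Mod left_kernel)"
  by (auto simp: ret_carrier_def quotient_def carrier_FactGroup ret_class_eq_rcos
      simp flip: ret_class_def)

context
  fixes C D assumes C: "C \<in> carrier (G Mod left_kernel)" and D: "D \<in> carrier (G Mod left_kernel)"
begin

lemma ret_L_eq_quot_L: "ret_L (carrier G) L C D = quot_L G left_kernel L C D"
  using FactGroup_some_rep(1)[OF left_kernel_subgroup] C D
  by (simp add: ret_L_def quot_L_def ret_class_eq_rcos)

lemma ret_R_eq_quot_R: "ret_R (carrier G) L R C D = quot_R G left_kernel R C D"
  using FactGroup_some_rep(1)[OF left_kernel_subgroup] C D
  by (simp add: ret_R_def quot_R_def ret_class_eq_rcos)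

lemma mult_ret_group: "C \<otimes>\<^bsub>ret_group G L\<^esub> D = C \<otimes>\<^bsub>G Mod left_kernel\<^esub> D"
  using FactGroup_some_rep[OF left_kernel_subgroup] C D
  by (simp add: ret_group_def ret_class_eq_rcos normal.rcos_sum[OF left_kernel_normal, symmetric])

end

lemma carrier_ret_group: "carrier (ret_group G L) = carrier (G Mod left_kernel)"
  by (simp add: ret_group_def ret_carrier_eq_FactGroup)

lemma one_ret_group: "\<one>\<^bsub>ret_group G L\<^esub> = \<one>\<^bsub>G Mod left_kernel\<^esub>"
  by (simp add: ret_group_def ret_class_eq_rcos subgroup.subset[OF left_kernel_subgroup])

end

lemma sym_groupI: "symmetric_group G L R \<Longrightarrow> sym_group G L R"
  by (intro sym_group.intro sym_group_axioms.intro) (auto simp only: symmetric_group_def)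

lemma symmetric_group_imp_symmetric_set:
  "symmetric_group G L R \<Longrightarrow> symmetric_set (carrier G) L R"
  by (rule sym_group.symmetric_set[OF sym_groupI])

lemma symmetric_group_cong:
  assumes sg: "symmetric_group G L R"
    and carrier: "carrier H = carrier G" and one: "\<one>\<^bsub>H\<^esub> = \<one>\<^bsub>G\<^esub>"
    and mult: "\<And>x y. x \<in> carrier G \<Longrightarrow> y \<in> carrier G \<Longrightarrow> x \<otimes>\<^bsub>H\<^esub> y = x \<otimes>\<^bsub>G\<^esub> y"
    and L: "\<And>x y. x \<in> carrier G \<Longrightarrow> y \<in> carrier G \<Longrightarrow> L' x y = L x y"
    and R: "\<And>x y. x \<in> carrier G \<Longrightarrow> y \<in> carrier G \<Longrightarrow> R' x y = R x y"
  shows "symmetric_group H L' R'"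
proof -
  interpret sym_group G L R
    using sg by (rule sym_groupI)
  have "group H"
    by (rule groupI) (auto simp: carrier one mult m_assoc intro: l_inv_ex)
  then show ?thesis
    unfolding symmetric_group_def involutive_on_def
    by (simp add: carrier one mult L R L_involution R_involution
        L_mult_left L_mult_right R_mult_left R_mult_right flip: mult_eq_L_R)
qed

context sym_group
begin

lemma symmetric_group_ret_group:
  "symmetric_group (ret_group G L) (ret_L (carrier G) L) (ret_R (carrier G) L R)"
  using symmetric_group_FactGroup[OF left_kernel_normal quot_L_left_kernel quot_R_left_kernel]
  by (rule symmetric_group_cong)
     (simp_all add: carrier_ret_group one_ret_group mult_ret_group ret_L_eq_quot_L ret_R_eq_quot_R)

lemma symmetric_set_retraction:
  "symmetric_set (ret_carrier (carrier G) L) (ret_L (carrier G) L) (ret_R (carrier G) L R)"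
  using symmetric_group_imp_symmetric_set[OF symmetric_group_ret_group]
  by (simp add: ret_group_def)

lemma symset_iso_FactGroup_retraction:
  "symset_iso (carrier (G Mod left_kernel)) (quot_L G left_kernel L) (quot_R G left_kernel R)
     (ret_carrier (carrier G) L) (ret_L (carrier G) L) (ret_R (carrier G) L R) (\<lambda>C. C)"
  unfolding symset_iso_def ret_carrier_eq_FactGroup
  by (simp add: ret_L_eq_quot_L ret_R_eq_quot_R bij_betw_def)

lemma iso_FactGroup_ret_group: "(\<lambda>C. C) \<in> iso (G Mod left_kernel) (ret_group G L)"
  by (simp add: iso_def hom_def carrier_ret_group mult_ret_group bij_betw_def)

lemma mult_ret_group_ret_class:
  "a \<in> carrier G \<Longrightarrow> b \<in> carrier G \<Longrightarrow>
    ret_class (carrier G) L a \<otimes>\<^bsub>ret_group G L\<^esub> ret_class (carrier G) L b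
      = ret_class (carrier G) L (a \<otimes> b)"
  by (simp add: ret_class_eq_rcos mult_ret_group carrier_FactGroup normal.rcos_sum[OF left_kernel_normal])

end

theorem mainTheorem4:
  fixes G :: "('a, 'b) monoid_scheme"
    and L R :: "'a \<Rightarrow> 'a \<Rightarrow> 'a"
  assumes sg: "symmetric_group G L R"
  defines "\<Gamma> \<equiv> {a \<in> carrier G. \<forall>u\<in>carrier G. L a u = u}"
  shows
    "\<Gamma> = {a \<in> carrier G. \<forall>u\<in>carrier G. R u a = u}
     \<and> \<Gamma> \<lhd> G
     \<and> (\<forall>x\<in>\<Gamma>. \<forall>y\<in>\<Gamma>. x \<otimes>\<^bsub>G\<^esub> y = y \<otimes>\<^bsub>G\<^esub> x)
     \<and> (\<forall>a\<in>carrier G. \<forall>g\<in>\<Gamma>. L a g \<in> \<Gamma> \<and> R g a \<in> \<Gamma>)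
     \<and> (\<forall>a\<in>carrier G. \<forall>b\<in>carrier G.
          quot_L G \<Gamma> L (\<Gamma> #>\<^bsub>G\<^esub> a) (\<Gamma> #>\<^bsub>G\<^esub> b) = \<Gamma> #>\<^bsub>G\<^esub> L a b \<and>
          quot_R G \<Gamma> R (\<Gamma> #>\<^bsub>G\<^esub> a) (\<Gamma> #>\<^bsub>G\<^esub> b) = \<Gamma> #>\<^bsub>G\<^esub> R a b)
     \<and> symmetric_group (G Mod \<Gamma>) (quot_L G \<Gamma> L) (quot_R G \<Gamma> R)
     \<and> symmetric_set (ret_carrier (carrier G) L) (ret_L (carrier G) L) (ret_R (carrier G) L R)
     \<and> (\<exists>\<phi>. (\<forall>a\<in>carrier G. \<phi> (\<Gamma> #>\<^bsub>G\<^esub> a) = ret_class (carrier G) L a)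
           \<and> symset_iso (carrier (G Mod \<Gamma>)) (quot_L G \<Gamma> L) (quot_R G \<Gamma> R)
                 (ret_carrier (carrier G) L) (ret_L (carrier G) L) (ret_R (carrier G) L R) \<phi>
           \<and> (\<forall>a\<in>carrier G. \<forall>b\<in>carrier G.
                mult (ret_group G L) (ret_class (carrier G) L a) (ret_class (carrier G) L b)
                  = ret_class (carrier G) L (a \<otimes>\<^bsub>G\<^esub> b))
           \<and> symmetric_group (ret_group G L) (ret_L (carrier G) L) (ret_R (carrier G) L R)
           \<and> \<phi> \<in> iso (G Mod \<Gamma>) (ret_group G L))"
proof -
  interpret sym_group G L R
    using sg by (rule sym_groupI)
  show ?thesis
    unfolding \<Gamma>_def
    using left_kernel_eq_right_kernel left_kernel_normal left_kernel_comm
      L_left_kernel_closed R_left_kernel_closed quot_L_left_kernel quot_R_left_kernel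
      symmetric_group_FactGroup[OF left_kernel_normal quot_L_left_kernel quot_R_left_kernel]
      symmetric_set_retraction symset_iso_FactGroup_retraction mult_ret_group_ret_class
      symmetric_group_ret_group iso_FactGroup_ret_group
    by (intro conjI exI[of _ "\<lambda>C. C"]) (simp_all add: ret_class_eq_rcos)
qed

end
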